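(* Let $V\subset\mathcal{A}_0$ be compact and let $V^T$ be complete. Then for every continuous linear functional $\lambda$ on $\mathcal{A}$, with $\lambda:=g$, $$\lambda(V)=\bigcup_{f\in\mathrm{bor}(V)}(f*g)(\overline D),\qquad \partial\lambda(V)\subset\bigcup_{f\in\mathrm{bor}(V)}(f*g)(\partial D).$$
   Context: $D=\{z:|z|<1\}$, $\overline D$ its closure, $\partial D$ the unit circle. $\mathcal{A}$ is the space of functions $f(z)=\sum_{k\ge0}a_k(f)z^k$ analytic in $D$, with the topology of locally uniform convergence; $\mathcal{A}_0=\{f\in\mathcal{A}: a_0(f)=1\}$. $\mathcal{A}(\overline D)$ is the set of functions analytic in some disk $\{|z|<R\}$ with $R>1$, and $\mathcal{A}_0(\overline D)=\{g\in\mathcal{A}(\overline D):a_0(g)=1\}$. The Hadamard product is $(f*g)(z)=\sum_{k\ge0}a_k(f)a_k(g)z^k$. Every continuous linear functional $\lambda$ on $\mathcal{A}$ has the form $\lambda(f)=(f*g)(1)$ for a function $g\in\mathcal{A}(\overline D)$; this is written $\lambda:=g$. $V^T=\{g\in\mathcal{A}_0(\overline D): (f*g)(1)\ne0 \ \forall f\in V\}$. For $x\in\overline D$, $(P_xf)(z)=f(xz)$; a set $W$ is complete if $P_xf\in W$ for all $f\in W$, $x\in\overline D$. Let $e\equiv1$. If $V\ne\{e\}$, an element $f\in V$ is a border element of $V$ if whenever $f=P_xg$ with $g\in V$, $x\in\overline D$, then $|x|=1$; $\mathrm{bor}(V)$ is the set of border elements. If $V=\{e\}$, $\mathrm{bor}(V)=\{e\}$.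 *)

theory Defs
  imports "HOL-Analysis.Analysis"
begin

text \<open>Elements of the space A are represented as functions holomorphic on the unit
  disk D = ball 0 1, normalised to be 0 outside D (so that HOL equality of functions
  is equality on D).\<close>

definition anA :: "(complex \<Rightarrow> complex) set" where
  "anA = {f. f holomorphic_on ball 0 1 \<and> (\<forall>z. z \<notin> ball 0 1 \<longrightarrow> f z = 0)}"

definition tcoeff :: "(complex \<Rightarrow> complex) \<Rightarrow> nat \<Rightarrow> complex" where
  "tcoeff f k = (deriv ^^ k) f 0 / of_nat (fact k)"

definition anA0 :: "(complex \<Rightarrow> complex) set" where
  "anA0 = {f \<in> anA. tcoeff f 0 = 1}"

text \<open>A(closed D): functions analytic in some disk of radius R > 1.\<close>
definition anAc :: "(complex \<Rightarrow> complex) set" where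
  "anAc = {g. \<exists>R>1. g holomorphic_on ball 0 R}"

definition anAc0 :: "(complex \<Rightarrow> complex) set" where
  "anAc0 = {g \<in> anAc. tcoeff g 0 = 1}"

definition hadamard :: "(complex \<Rightarrow> complex) \<Rightarrow> (complex \<Rightarrow> complex) \<Rightarrow> complex \<Rightarrow> complex" where
  "hadamard f g z = (\<Sum>k. tcoeff f k * tcoeff g k * z ^ k)"

definition dualT :: "(complex \<Rightarrow> complex) set \<Rightarrow> (complex \<Rightarrow> complex) set" where
  "dualT V = {g \<in> anAc0. \<forall>f\<in>V. hadamard f g 1 \<noteq> 0}"

definition Pop :: "complex \<Rightarrow> (complex \<Rightarrow> complex) \<Rightarrow> complex \<Rightarrow> complex" where
  "Pop x f = (\<lambda>z. if z \<in> ball 0 1 then f (x * z) else 0)"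

text \<open>Completeness of a set W of elements of A(closed D) (here P_x g is just z \<mapsto> g(x z)).\<close>
definition complete_Ac :: "(complex \<Rightarrow> complex) set \<Rightarrow> bool" where
  "complete_Ac W \<longleftrightarrow> (\<forall>g\<in>W. \<forall>x\<in>cball 0 1. (\<lambda>z. g (x * z)) \<in> W)"

definition eA :: "complex \<Rightarrow> complex" where
  "eA = (\<lambda>z. if z \<in> ball 0 1 then 1 else 0)"

definition bor :: "(complex \<Rightarrow> complex) set \<Rightarrow> (complex \<Rightarrow> complex) set" where
  "bor V = (if V = {eA} then {eA}
            else {f \<in> V. \<forall>g\<in>V. \<forall>x\<in>cball 0 1. f = Pop x g \<longrightarrow> cmod x = 1})"

text \<open>Compactness in the topology of locally uniform convergence on D (a metrizable
  topology, so compactness = sequential compactness).\<close>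
definition lu_compact :: "(complex \<Rightarrow> complex) set \<Rightarrow> bool" where
  "lu_compact V \<longleftrightarrow> (\<forall>F::nat \<Rightarrow> complex \<Rightarrow> complex. (\<forall>n. F n \<in> V) \<longrightarrow>
     (\<exists>l\<in>V. \<exists>r. strict_mono r \<and>
        (\<forall>K. compact K \<and> K \<subseteq> ball 0 1 \<longrightarrow> uniform_limit K (F \<circ> r) l sequentially)))"

end

theory Submission
  imports Defs "HOL-Complex_Analysis.Complex_Analysis"
begin

(*
  Write \<Lambda> f = (f * g)(1). Since (P_x f) * g = (f * g)(x \<cdot>), the value (f * g)(x) equals \<Lambda>(P_x f)
  for |x| \<le> 1, and compactness of V shows that every element of V is P_x f with f a border element
  (take |x| minimal). Conversely let f \<in> V and |z| \<le> 1. If w = (f * g)(z) were neither in \<Lambda>(V)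
  nor equal to g(0), then h = (g - w) / (g(0) - w) would lie in V^T, hence so would h(z \<cdot>) by
  completeness, although (f * h(z \<cdot>))(1) = (f * h)(z) = 0. So the connected set (f * g)(closed D)
  lies in \<Lambda>(V) \<union> {g(0)} and meets the closed set \<Lambda>(V) in \<Lambda>(f); it also contains
  g(0) = (f * g)(0), which therefore belongs to \<Lambda>(V) as well. The boundary inclusion follows from
  the open mapping theorem.
*)

lemma mult_mem_ball: "cmod x \<le> 1 \<Longrightarrow> z \<in> ball 0 r \<Longrightarrow> x * z \<in> ball 0 r"
  by (auto simp: norm_mult intro: le_less_trans[OF mult_left_le_one_le])

lemma holomorphic_on_dilation:
  assumes "h holomorphic_on ball 0 R" "cmod x \<le> 1"
  shows "(\<lambda>z. h (x * z)) holomorphic_on ball 0 R"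
proof -
  have "h holomorphic_on (\<lambda>z. x * z) ` ball 0 R"
    using assms mult_mem_ball holomorphic_on_subset by blast
  then have "(h \<circ> (\<lambda>z. x * z)) holomorphic_on ball 0 R"
    by (intro holomorphic_on_compose holomorphic_intros)
  then show ?thesis by (simp add: o_def)
qed

lemma tcoeff_0: "tcoeff f 0 = f 0"
  by (simp add: tcoeff_def)

lemma tcoeff_dilation:
  assumes "h holomorphic_on ball 0 R" "cmod x \<le> 1" "0 < R"
  shows "tcoeff (\<lambda>z. h (x * z)) k = x ^ k * tcoeff h k"
proof -
  have "(deriv ^^ k) (\<lambda>z. h (x * z)) 0 = x ^ k * (deriv ^^ k) h (x * 0)"
    by (rule higher_deriv_compose_linear[OF assms(1), where S = "ball 0 R"])
       (use assms mult_mem_ball in auto)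
  then show ?thesis by (simp add: tcoeff_def)
qed

lemma tcoeff_diff:
  assumes "f holomorphic_on ball 0 R" "g holomorphic_on ball 0 R" "0 < R"
  shows "tcoeff (\<lambda>z. f z - g z) k = tcoeff f k - tcoeff g k"
  using higher_deriv_diff[OF assms(1,2) open_ball, of 0 k] assms(3)
  by (simp add: tcoeff_def diff_divide_distrib)

lemma tcoeff_affine:
  assumes "g holomorphic_on ball 0 R" "0 < R"
  shows "tcoeff (\<lambda>z. c * (g z - w)) k = c * (tcoeff g k - (if k = 0 then w else 0))"
proof -
  have gw: "(\<lambda>z. g z - w) holomorphic_on ball 0 R"
    using assms by (intro holomorphic_intros)
  have "(deriv ^^ k) (\<lambda>z. c * (g z - w)) 0 = c * (deriv ^^ k) (\<lambda>z. g z - w) 0"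
    by (rule higher_deriv_cmult[OF gw]) (use assms in auto)
  also have "(deriv ^^ k) (\<lambda>z. g z - w) 0 = (deriv ^^ k) g 0 - (deriv ^^ k) (\<lambda>z. w) 0"
    by (rule higher_deriv_diff[OF assms(1) holomorphic_on_const open_ball]) (use assms in auto)
  finally show ?thesis by (cases k) (auto simp: tcoeff_def)
qed

lemma Pop_holomorphic:
  assumes "f holomorphic_on ball 0 1" "cmod x \<le> 1"
  shows "Pop x f holomorphic_on ball 0 1"
  by (rule holomorphic_transform[OF holomorphic_on_dilation[OF assms]]) (simp add: Pop_def)

lemma tcoeff_Pop:
  assumes "f holomorphic_on ball 0 1" "cmod x \<le> 1"
  shows "tcoeff (Pop x f) k = x ^ k * tcoeff f k"
proof -
  have "(deriv ^^ k) (Pop x f) 0 = (deriv ^^ k) (\<lambda>z. f (x * z)) 0"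
    by (rule higher_deriv_transform_within_open[OF Pop_holomorphic[OF assms]
          holomorphic_on_dilation[OF assms]]) (auto simp: Pop_def)
  then show ?thesis using tcoeff_dilation[OF assms, of k] by (simp add: tcoeff_def)
qed

lemma Pop_Pop: "cmod x \<le> 1 \<Longrightarrow> Pop x (Pop y h) = Pop (x * y) h"
  using mult_mem_ball[of x _ 1] by (auto simp: Pop_def fun_eq_iff mult_ac)

lemma Pop_1: "f \<in> anA \<Longrightarrow> Pop 1 f = f"
  by (auto simp: Pop_def anA_def fun_eq_iff)

lemma Pop_0: "f \<in> anA0 \<Longrightarrow> Pop 0 f = eA"
  by (auto simp: Pop_def anA0_def eA_def fun_eq_iff tcoeff_0)

lemma anA0_holomorphic: "f \<in> anA0 \<Longrightarrow> f holomorphic_on ball 0 1"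
  by (simp add: anA0_def anA_def)

lemma hadamard_commute: "hadamard f g = hadamard g f"
  by (simp add: hadamard_def fun_eq_iff mult_ac)

lemma hadamard_0: "hadamard f g 0 = f 0 * g 0"
  by (simp add: hadamard_def tcoeff_0)

lemma hadamard_coeff_scaled:
  assumes "\<And>k. tcoeff F k = x ^ k * tcoeff f k"
  shows "hadamard F g 1 = hadamard f g x"
  unfolding hadamard_def assms by (simp add: mult_ac)

lemma hadamard_Pop:
  assumes "f holomorphic_on ball 0 1" "cmod x \<le> 1"
  shows "hadamard (Pop x f) g 1 = hadamard f g x"
  by (rule hadamard_coeff_scaled, rule tcoeff_Pop[OF assms])

lemma hadamard_dilation_right:
  assumes "h holomorphic_on ball 0 R" "0 < R" "cmod z \<le> 1"
  shows "hadamard f (\<lambda>\<zeta>. h (z * \<zeta>)) 1 = hadamard f h z"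
  using hadamard_coeff_scaled[OF tcoeff_dilation[OF assms(1,3,2)]] by (simp add: hadamard_commute)

lemma norm_tcoeff_le:
  assumes "f holomorphic_on ball 0 R" "0 < \<rho>" "\<rho> < R"
    and "\<And>z. cmod z = \<rho> \<Longrightarrow> cmod (f z) \<le> B"
  shows "cmod (tcoeff f k) \<le> B / \<rho> ^ k"
proof -
  have "cball 0 \<rho> \<subseteq> ball (0::complex) R"
    using assms(3) by auto
  then have "f holomorphic_on cball 0 \<rho>"
    using assms(1) holomorphic_on_subset by blast
  then have "cmod ((deriv ^^ k) f 0) \<le> fact k * B / \<rho> ^ k"
    using assms(2,4)
    by (intro Cauchy_inequality holomorphic_on_imp_continuous_on) (auto elim: holomorphic_on_subset)
  then show ?thesis
    by (simp add: tcoeff_def norm_divide field_simps)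
qed

lemma holomorphic_bounded_on_sphere:
  assumes "f holomorphic_on ball 0 R" "\<rho> < R"
  obtains B where "\<And>z. cmod z = \<rho> \<Longrightarrow> cmod (f z) \<le> B"
proof -
  have "sphere 0 \<rho> \<subseteq> ball (0::complex) R"
    using assms(2) by auto
  then have "continuous_on (sphere 0 \<rho>) f"
    using assms(1) holomorphic_on_imp_continuous_on holomorphic_on_subset by blast
  then have "compact (f ` sphere 0 \<rho>)"
    by (intro compact_continuous_image compact_sphere)
  then obtain B where B: "\<forall>y\<in>f ` sphere 0 \<rho>. norm y \<le> B"
    using compact_imp_bounded bounded_iff by metis
  show ?thesis
    by (rule that) (use B in auto)
qed

text \<open>Cauchy estimates of an element of \<open>A\<close> are taken on the circle of radius \<open>\<rho> < 1\<close>; the gap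
  \<open>1 < \<rho> * r\<close> then makes Hadamard series converge geometrically beyond the closed unit disc.\<close>

lemma anAc_tcoeff_decay:
  assumes "g \<in> anAc"
  obtains \<rho> r C where "0 < \<rho>" "\<rho> < 1" "0 < r" "1 < \<rho> * r" "0 \<le> C"
    "\<And>k. cmod (tcoeff g k) \<le> C / r ^ k"
proof -
  obtain R where R: "R > 1" "g holomorphic_on ball 0 R"
    using assms by (auto simp: anAc_def)
  define r where "r = (1 + R) / 2"
  have r: "1 < r" "r < R"
    using R by (auto simp: r_def)
  obtain B where B: "\<And>z. cmod z = r \<Longrightarrow> cmod (g z) \<le> B"
    using holomorphic_bounded_on_sphere[OF R(2) r(2)] by blast
  have "cmod (tcoeff g k) \<le> \<bar>B\<bar> / r ^ k" for k
  proof -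
    have "cmod (tcoeff g k) \<le> B / r ^ k"
      using norm_tcoeff_le[OF R(2)] r B by auto
    also have "\<dots> \<le> \<bar>B\<bar> / r ^ k"
      using r by (intro divide_right_mono) auto
    finally show ?thesis .
  qed
  moreover define \<rho> where "\<rho> = (1 + 1 / r) / 2"
  moreover have "0 < \<rho>" "\<rho> < 1" "1 < \<rho> * r"
    using r by (auto simp: \<rho>_def field_simps)
  ultimately show ?thesis
    using that[of \<rho> r "\<bar>B\<bar>"] r by auto
qed

lemma norm_hadamard_term_le:
  assumes "cmod a \<le> B / \<rho> ^ k" "cmod b \<le> C / r ^ k" "0 < \<rho>" "0 < r"
  shows "cmod (a * b * w ^ k) \<le> B * C * (cmod w / (\<rho> * r)) ^ k"
proof -
  have "cmod (a * b * w ^ k) = cmod a * cmod b * cmod w ^ k"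
    by (simp add: norm_mult norm_power)
  also have "\<dots> \<le> (B / \<rho> ^ k) * (C / r ^ k) * cmod w ^ k"
    using order_trans[OF norm_ge_zero assms(1)]
    by (intro mult_right_mono mult_mono assms(1,2)) auto
  also have "\<dots> = B * C * (cmod w / (\<rho> * r)) ^ k"
    by (simp add: power_divide power_mult_distrib)
  finally show ?thesis .
qed

lemma hadamard_sums:
  assumes "f holomorphic_on ball 0 1" "g \<in> anAc"
  obtains Q where "Q > 1"
    "\<And>w. cmod w < Q \<Longrightarrow> (\<lambda>k. tcoeff f k * tcoeff g k * w ^ k) sums hadamard f g w"
proof -
  obtain \<rho> r C where c: "0 < \<rho>" "\<rho> < 1" "0 < r" "1 < \<rho> * r" "0 \<le> C"
     "\<And>k. cmod (tcoeff g k) \<le> C / r ^ k"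
    using anAc_tcoeff_decay[OF assms(2)] by blast
  obtain B where B: "\<And>z. cmod z = \<rho> \<Longrightarrow> cmod (f z) \<le> B"
    using holomorphic_bounded_on_sphere[OF assms(1) c(2)] by blast
  have cf: "cmod (tcoeff f k) \<le> B / \<rho> ^ k" for k
    by (rule norm_tcoeff_le[OF assms(1) c(1,2) B])
  have sums: "(\<lambda>k. tcoeff f k * tcoeff g k * w ^ k) sums hadamard f g w"
    if w: "cmod w < \<rho> * r" for w
  proof -
    have "summable (\<lambda>k. B * C * (cmod w / (\<rho> * r)) ^ k)"
      using w c by (intro summable_mult summable_geometric) auto
    then have "summable (\<lambda>k. tcoeff f k * tcoeff g k * w ^ k)"
      by (rule summable_comparison_test[rotated])
         (use norm_hadamard_term_le[OF cf c(6,1,3)] in auto)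
    then show ?thesis by (simp add: hadamard_def summable_sums)
  qed
  show ?thesis
    by (rule that[of "\<rho> * r"]) (use c(4) sums in auto)
qed

lemma hadamard_holomorphic_beyond_disc:
  assumes "f holomorphic_on ball 0 1" "g \<in> anAc"
  obtains Q where "Q > 1" "hadamard f g holomorphic_on ball 0 Q"
proof -
  obtain Q where Q: "Q > 1"
    "\<And>w. cmod w < Q \<Longrightarrow> (\<lambda>k. tcoeff f k * tcoeff g k * w ^ k) sums hadamard f g w"
    using hadamard_sums[OF assms] by blast
  have "hadamard f g holomorphic_on ball 0 Q"
    by (rule power_series_holomorphic[where a = "\<lambda>k. tcoeff f k * tcoeff g k"]) (use Q in auto)
  then show ?thesis
    using that Q(1) by blast
qed

lemma hadamard_continuous_on_cball:
  assumes "f holomorphic_on ball 0 1" "g \<in> anAc"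
  shows "continuous_on (cball 0 1) (hadamard f g)"
proof -
  obtain Q where "Q > 1" "hadamard f g holomorphic_on ball 0 Q"
    using hadamard_holomorphic_beyond_disc[OF assms] by blast
  moreover have "cball 0 1 \<subseteq> ball (0::complex) Q"
    using \<open>Q > 1\<close> by auto
  ultimately show ?thesis
    using holomorphic_on_imp_continuous_on holomorphic_on_subset by blast
qed

lemma hadamard_holomorphic_on_ball:
  assumes "f holomorphic_on ball 0 1" "g \<in> anAc"
  shows "hadamard f g holomorphic_on ball 0 1"
proof -
  obtain Q where "Q > 1" "hadamard f g holomorphic_on ball 0 Q"
    using hadamard_holomorphic_beyond_disc[OF assms] by blast
  then show ?thesis
    by (elim holomorphic_on_subset) auto
qed

lemma hadamard_diff:
  assumes "f holomorphic_on ball 0 1" "l holomorphic_on ball 0 1" "g \<in> anAc" "cmod z \<le> 1"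
  shows "hadamard (\<lambda>x. f x - l x) g z = hadamard f g z - hadamard l g z"
proof -
  obtain Q1 where "Q1 > 1"
    "\<And>w. cmod w < Q1 \<Longrightarrow> (\<lambda>k. tcoeff f k * tcoeff g k * w ^ k) sums hadamard f g w"
    using hadamard_sums[OF assms(1,3)] by blast
  moreover obtain Q2 where "Q2 > 1"
    "\<And>w. cmod w < Q2 \<Longrightarrow> (\<lambda>k. tcoeff l k * tcoeff g k * w ^ k) sums hadamard l g w"
    using hadamard_sums[OF assms(2,3)] by blast
  ultimately have "(\<lambda>k. tcoeff f k * tcoeff g k * z ^ k - tcoeff l k * tcoeff g k * z ^ k)
      sums (hadamard f g z - hadamard l g z)"
    using assms(4) by (intro sums_diff) auto
  then show ?thesis
    by (simp add: hadamard_def sums_iff tcoeff_diff[OF assms(1,2)] left_diff_distrib)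
qed

lemma norm_hadamard_le:
  assumes f: "\<And>k. cmod (tcoeff f k) \<le> d / \<rho> ^ k" and g: "\<And>k. cmod (tcoeff g k) \<le> C / r ^ k"
    and \<rho>: "0 < \<rho>" and r: "0 < r" "1 < \<rho> * r" and z: "cmod z \<le> 1"
  shows "cmod (hadamard f g z) \<le> d * C / (1 - 1 / (\<rho> * r))"
proof -
  define q where "q = 1 / (\<rho> * r)"
  have q: "0 < q" "q < 1"
    using \<rho> r by (auto simp: q_def field_simps)
  have "0 \<le> d" "0 \<le> C"
    using order_trans[OF norm_ge_zero f[of 0]] order_trans[OF norm_ge_zero g[of 0]] by auto
  have term_le: "cmod (tcoeff f k * tcoeff g k * z ^ k) \<le> d * C * q ^ k" for k
  proof -
    have "cmod (tcoeff f k * tcoeff g k * z ^ k) \<le> d * C * (cmod z / (\<rho> * r)) ^ k"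
      by (rule norm_hadamard_term_le[OF f g \<rho> r(1)])
    also have "\<dots> \<le> d * C * q ^ k"
      unfolding q_def using \<open>0 \<le> d\<close> \<open>0 \<le> C\<close> \<rho> r z
      by (intro mult_left_mono power_mono divide_right_mono) auto
    finally show ?thesis .
  qed
  have "cmod (hadamard f g z) \<le> (\<Sum>k. d * C * q ^ k)"
    unfolding hadamard_def using q by (intro norm_suminf_le term_le summable_mult summable_geometric) auto
  also have "\<dots> = d * C / (1 - q)"
    using q by (simp add: suminf_mult suminf_geometric)
  finally show ?thesis by (simp add: q_def)
qed

lemma tendsto_hadamard:
  assumes g: "g \<in> anAc" and F: "\<And>n. F n holomorphic_on ball 0 1" and l: "l holomorphic_on ball 0 1"
    and U: "\<And>K. compact K \<Longrightarrow> K \<subseteq> ball 0 1 \<Longrightarrow> uniform_limit K F l sequentially"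
    and z: "cmod z \<le> 1"
  shows "(\<lambda>n. hadamard (F n) g z) \<longlonglongrightarrow> hadamard l g z"
  unfolding tendsto_iff
proof (intro allI impI)
  fix e :: real
  assume e: "0 < e"
  obtain \<rho> r C where c: "0 < \<rho>" "\<rho> < 1" "0 < r" "1 < \<rho> * r" "0 \<le> C"
     "\<And>k. cmod (tcoeff g k) \<le> C / r ^ k"
    using anAc_tcoeff_decay[OF g] by blast
  define M where "M = C / (1 - 1 / (\<rho> * r))"
  have "0 \<le> M"
    using c by (auto simp: M_def field_simps)
  define d where "d = e / (M + 1)"
  have "0 < d" "d * M < e"
    using e \<open>0 \<le> M\<close> by (auto simp: d_def field_simps)
  have "cball 0 \<rho> \<subseteq> ball (0::complex) 1"
    using c by auto
  then have "\<forall>\<^sub>F n in sequentially. \<forall>y\<in>cball 0 \<rho>. dist (F n y) (l y) < d"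
    using U[of "cball 0 \<rho>"] \<open>0 < d\<close> by (auto simp: uniform_limit_iff)
  then show "\<forall>\<^sub>F n in sequentially. dist (hadamard (F n) g z) (hadamard l g z) < e"
  proof (rule eventually_mono)
    fix n
    assume n: "\<forall>y\<in>cball 0 \<rho>. dist (F n y) (l y) < d"
    have "(\<lambda>x. F n x - l x) holomorphic_on ball 0 1"
      using F l by (intro holomorphic_intros)
    then have "cmod (tcoeff (\<lambda>x. F n x - l x) k) \<le> d / \<rho> ^ k" for k
      using n c by (intro norm_tcoeff_le) (auto simp: dist_norm less_imp_le)
    then have "cmod (hadamard (\<lambda>x. F n x - l x) g z) \<le> d * M"
      using norm_hadamard_le[OF _ c(6) c(1,3,4) z] by (simp add: M_def)
    then show "dist (hadamard (F n) g z) (hadamard l g z) < e"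
      using hadamard_diff[OF F l g z] \<open>d * M < e\<close> by (simp add: dist_norm)
  qed
qed

lemma compact_hadamard_image:
  assumes V: "V \<subseteq> anA0" and cpt: "lu_compact V" and g: "g \<in> anAc"
  shows "compact ((\<lambda>f. hadamard f g 1) ` V)"
  unfolding compact_eq_seq_compact_metric seq_compact_def
proof (intro allI impI)
  fix s :: "nat \<Rightarrow> complex"
  assume "\<forall>n. s n \<in> (\<lambda>f. hadamard f g 1) ` V"
  then have "\<forall>n. \<exists>f. f \<in> V \<and> s n = hadamard f g 1"
    by blast
  then obtain F where "\<forall>n. F n \<in> V \<and> s n = hadamard (F n) g 1"
    by (rule choice[THEN exE])
  then have F: "\<And>n. F n \<in> V" "s = (\<lambda>n. hadamard (F n) g 1)"
    by auto
  obtain l r where l: "l \<in> V" "strict_mono r"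
    "\<And>K. compact K \<Longrightarrow> K \<subseteq> ball 0 1 \<Longrightarrow> uniform_limit K (F \<circ> r) l sequentially"
    using cpt[unfolded lu_compact_def, rule_format, of F] F(1) by auto
  have "(\<lambda>n. hadamard ((F \<circ> r) n) g 1) \<longlonglongrightarrow> hadamard l g 1"
    using F(1) l(1) V anA0_holomorphic by (intro tendsto_hadamard[OF g _ _ l(3)]) auto
  then have "(s \<circ> r) \<longlonglongrightarrow> hadamard l g 1"
    by (simp add: F(2) o_def)
  then show "\<exists>w\<in>(\<lambda>f. hadamard f g 1) ` V. \<exists>r::nat \<Rightarrow> nat. strict_mono r \<and> (s \<circ> r) \<longlonglongrightarrow> w"
    using l(1,2) by blast
qed

lemma hadamard_affine:
  assumes f: "f holomorphic_on ball 0 1" and g: "g \<in> anAc" and x: "cmod x \<le> 1"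
  shows "hadamard f (\<lambda>\<zeta>. c * (g \<zeta> - w)) x = c * (hadamard f g x - w * f 0)"
proof -
  define h where "h = (\<lambda>\<zeta>. c * (g \<zeta> - w))"
  obtain R where R: "R > 1" "g holomorphic_on ball 0 R"
    using g by (auto simp: anAc_def)
  have tc: "tcoeff h k = c * (tcoeff g k - (if k = 0 then w else 0))" for k
    unfolding h_def by (rule tcoeff_affine[OF R(2)]) (use R in auto)
  obtain Q where Q: "Q > 1"
    "\<And>w. cmod w < Q \<Longrightarrow> (\<lambda>k. tcoeff f k * tcoeff g k * w ^ k) sums hadamard f g w"
    using hadamard_sums[OF f g] by blast
  have "(\<lambda>k. c * (tcoeff f k * tcoeff g k * x ^ k
      - (if k = 0 then tcoeff f k * w * x ^ k else 0)))
      sums (c * (hadamard f g x - tcoeff f 0 * w * x ^ 0))"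
    by (intro sums_mult sums_diff Q(2) sums_single) (use x Q(1) in auto)
  moreover have "(\<lambda>k. c * (tcoeff f k * tcoeff g k * x ^ k
      - (if k = 0 then tcoeff f k * w * x ^ k else 0))) = (\<lambda>k. tcoeff f k * tcoeff h k * x ^ k)"
  proof
    fix k
    show "c * (tcoeff f k * tcoeff g k * x ^ k - (if k = 0 then tcoeff f k * w * x ^ k else 0))
        = tcoeff f k * tcoeff h k * x ^ k"
      by (cases k) (simp_all add: tc algebra_simps)
  qed
  ultimately have "(\<lambda>k. tcoeff f k * tcoeff h k * x ^ k)
      sums (c * (hadamard f g x - tcoeff f 0 * w * x ^ 0))"
    by (simp only:)
  then have "hadamard f h x = c * (hadamard f g x - tcoeff f 0 * w * x ^ 0)"
    unfolding hadamard_def by (rule sums_unique[symmetric])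
  then show ?thesis
    unfolding h_def by (simp add: tcoeff_0 ac_simps)
qed

lemma hadamard_value_in_image_or_g0:
  assumes V: "V \<subseteq> anA0" and comp: "complete_Ac (dualT V)" and g: "g \<in> anAc"
    and f: "f \<in> V" and z: "cmod z \<le> 1"
  shows "hadamard f g z \<in> insert (g 0) ((\<lambda>f. hadamard f g 1) ` V)"
proof (rule ccontr)
  define w where "w = hadamard f g z"
  define c where "c = 1 / (g 0 - w)"
  define h where "h = (\<lambda>\<zeta>. c * (g \<zeta> - w))"
  assume "hadamard f g z \<notin> insert (g 0) ((\<lambda>f. hadamard f g 1) ` V)"
  then have w: "w \<noteq> g 0" "\<And>f'. f' \<in> V \<Longrightarrow> hadamard f' g 1 \<noteq> w"
    by (auto simp: w_def image_iff)
  obtain R where R: "R > 1" "g holomorphic_on ball 0 R"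
    using g by (auto simp: anAc_def)
  have hR: "h holomorphic_on ball 0 R"
    unfolding h_def using R by (intro holomorphic_intros)
  have hadamard_h: "hadamard f' h x = c * (hadamard f' g x - w * f' 0)"
    if "f' holomorphic_on ball 0 1" "cmod x \<le> 1" for f' x
    unfolding h_def using hadamard_affine[OF that(1) g that(2)] .
  have f0: "\<And>f'. f' \<in> V \<Longrightarrow> f' 0 = 1" and holo: "\<And>f'. f' \<in> V \<Longrightarrow> f' holomorphic_on ball 0 1"
    using V by (auto simp: anA0_def anA_def tcoeff_0)
  have "c \<noteq> 0"
    using w(1) by (simp add: c_def)
  have "h \<in> anAc0"
    using R hR w(1) by (auto simp: anAc0_def anAc_def tcoeff_0 h_def c_def)
  moreover have "hadamard f' h 1 \<noteq> 0" if "f' \<in> V" for f'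
    using hadamard_h[OF holo[OF that], of 1] f0[OF that] w(2)[OF that] \<open>c \<noteq> 0\<close> by simp
  ultimately have "h \<in> dualT V"
    by (simp add: dualT_def)
  then have "(\<lambda>\<zeta>. h (z * \<zeta>)) \<in> dualT V"
    using comp z by (auto simp: complete_Ac_def)
  then have "hadamard f h z \<noteq> 0"
    using f hadamard_dilation_right[OF hR _ z] R(1) by (auto simp: dualT_def)
  then show False
    using hadamard_h[OF holo[OF f] z] f0[OF f] by (simp add: w_def)
qed

lemma hadamard_image_subset:
  assumes V: "V \<subseteq> anA0" and cpt: "lu_compact V" and comp: "complete_Ac (dualT V)"
    and g: "g \<in> anAc" and f: "f \<in> V"
  shows "hadamard f g ` cball 0 1 \<subseteq> (\<lambda>f. hadamard f g 1) ` V"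
proof -
  define L where "L = (\<lambda>f. hadamard f g 1) ` V"
  define S where "S = hadamard f g ` cball 0 1"
  have holo: "f holomorphic_on ball 0 1"
    using V f by (auto intro: anA0_holomorphic)
  have "connected S"
    unfolding S_def by (intro connected_continuous_image hadamard_continuous_on_cball holo g) simp
  moreover have "S \<subseteq> {g 0} \<union> L"
    using hadamard_value_in_image_or_g0[OF V comp g f] by (force simp: S_def L_def)
  moreover have "closed L"
    unfolding L_def using compact_hadamard_image[OF V cpt g] by (rule compact_imp_closed)
  moreover have "L \<inter> S \<noteq> {}"
    using f unfolding L_def S_def by (auto intro!: image_eqI[of _ _ 1])
  moreover have "f 0 = 1"
    using V f by (auto simp: anA0_def tcoeff_0)
  then have "g 0 \<in> S"
    unfolding S_def using hadamard_0[of f g] by (intro image_eqI[of _ _ 0]) auto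
  ultimately have "g 0 \<in> L"
    using connected_closedD[of S "{g 0}" L] by auto
  then show ?thesis
    using \<open>S \<subseteq> {g 0} \<union> L\<close> by (auto simp: S_def L_def)
qed

lemma tendsto_uniform_limit_compose:
  fixes l :: "'a::metric_space \<Rightarrow> 'b::real_normed_vector"
  assumes "uniform_limit K F l sequentially" "\<And>n. xs n \<in> K" "xs \<longlonglongrightarrow> x" "isCont l x"
  shows "(\<lambda>n. F n (xs n)) \<longlonglongrightarrow> l x"
proof -
  have "(\<lambda>n. F n (xs n) - l (xs n)) \<longlonglongrightarrow> 0"
    unfolding tendsto_iff
  proof (intro allI impI)
    fix e :: real
    assume "0 < e"
    then have "\<forall>\<^sub>F n in sequentially. \<forall>y\<in>K. dist (F n y) (l y) < e"
      using assms(1) by (auto simp: uniform_limit_iff)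
    then show "\<forall>\<^sub>F n in sequentially. dist (F n (xs n) - l (xs n)) 0 < e"
      by eventually_elim (use assms(2) in \<open>auto simp: dist_norm\<close>)
  qed
  moreover have "(\<lambda>n. l (xs n)) \<longlonglongrightarrow> l x"
    using isCont_tendsto_compose[OF assms(4,3)] .
  ultimately show ?thesis
    using tendsto_add by fastforce
qed

lemma Pop_limit:
  assumes x: "xs \<longlonglongrightarrow> x" "\<And>n. cmod (xs n) \<le> 1"
    and U: "\<And>K. compact K \<Longrightarrow> K \<subseteq> ball 0 1 \<Longrightarrow> uniform_limit K F l sequentially"
    and l: "continuous_on (ball 0 1) l" and eq: "\<And>n. f0 = Pop (xs n) (F n)"
  shows "f0 = Pop x l"
proof
  fix z
  show "f0 z = Pop x l z"
  proof (cases "z \<in> ball 0 1")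
    case False
    then show ?thesis using eq[of 0] by (simp add: Pop_def)
  next
    case True
    have "cmod x \<le> 1"
      using x by (intro Lim_norm_ubound[OF _ x(1)]) auto
    then have cont: "isCont l (x * z)"
      using l True mult_mem_ball continuous_on_eq_continuous_at by blast
    have mem: "xs n * z \<in> cball 0 (cmod z)" for n
      using x(2)[of n] by (simp add: norm_mult mult_left_le_one_le)
    have unif: "uniform_limit (cball 0 (cmod z)) F l sequentially"
      using True by (intro U compact_cball) auto
    have "(\<lambda>n. F n (xs n * z)) \<longlonglongrightarrow> l (x * z)"
      by (rule tendsto_uniform_limit_compose[where xs = "\<lambda>n. xs n * z",
            OF unif mem tendsto_mult_right[OF x(1)] cont])
    moreover have "F n (xs n * z) = f0 z" for n
      using eq[of n] True by (simp add: Pop_def)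
    ultimately have "(\<lambda>n. f0 z) \<longlonglongrightarrow> l (x * z)"
      by simp
    then show ?thesis
      using True by (simp add: Pop_def LIMSEQ_const_iff)
  qed
qed

lemma compact_Pop_parameters:
  assumes V: "V \<subseteq> anA0" and cpt: "lu_compact V"
  shows "compact {x \<in> cball 0 1. \<exists>f\<in>V. f0 = Pop x f}"
  unfolding compact_eq_bounded_closed
proof
  show "bounded {x \<in> cball 0 1. \<exists>f\<in>V. f0 = Pop x f}"
    by (rule bounded_subset[OF bounded_cball[of 0 1]]) auto
  show "closed {x \<in> cball 0 1. \<exists>f\<in>V. f0 = Pop x f}"
    unfolding closed_sequential_limits
  proof (intro allI impI, elim conjE)
    fix xs :: "nat \<Rightarrow> complex" and x
    assume xs: "\<forall>n. xs n \<in> {x \<in> cball 0 1. \<exists>f\<in>V. f0 = Pop x f}" "xs \<longlonglongrightarrow> x"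
    then have "\<forall>n. \<exists>f. f \<in> V \<and> f0 = Pop (xs n) f"
      by blast
    then obtain F where "\<forall>n. F n \<in> V \<and> f0 = Pop (xs n) (F n)"
      by (rule choice[THEN exE])
    then have F: "\<And>n. F n \<in> V" "\<And>n. f0 = Pop (xs n) (F n)"
      by auto
    obtain l r where l: "l \<in> V" "strict_mono r"
      "\<And>K. compact K \<Longrightarrow> K \<subseteq> ball 0 1 \<Longrightarrow> uniform_limit K (F \<circ> r) l sequentially"
      using cpt[unfolded lu_compact_def, rule_format, of F] F(1) by auto
    have "x \<in> cball 0 1"
      using xs closed_cball closed_sequentially by blast
    moreover have "f0 = Pop x l"
    proof (rule Pop_limit)
      show "(xs \<circ> r) \<longlonglongrightarrow> x"
        using LIMSEQ_subseq_LIMSEQ[OF xs(2) l(2)] .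
      show "continuous_on (ball 0 1) l"
        using V l(1) by (auto intro: holomorphic_on_imp_continuous_on anA0_holomorphic)
    qed (use xs(1) F(2) l(3) in auto)
    ultimately show "x \<in> {x \<in> cball 0 1. \<exists>f\<in>V. f0 = Pop x f}"
      using l(1) by blast
  qed
qed

lemma Pop_border_exists:
  assumes V: "V \<subseteq> anA0" and cpt: "lu_compact V" and f0: "f0 \<in> V" "f0 \<noteq> eA"
  obtains x f where "x \<in> cball 0 1" "f \<in> V" "f0 = Pop x f"
    "\<forall>h\<in>V. \<forall>y\<in>cball 0 1. f = Pop y h \<longrightarrow> cmod y = 1"
proof -
  define S where "S = {x \<in> cball 0 1. \<exists>f\<in>V. f0 = Pop x f}"
  have "Pop 1 f0 = f0"
    using V f0(1) Pop_1 by (auto simp: anA0_def)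
  then have "1 \<in> S"
    unfolding S_def using f0(1) by (auto intro!: bexI[of _ f0])
  then have "S \<noteq> {}"
    by blast
  moreover have "compact S"
    unfolding S_def using V cpt by (rule compact_Pop_parameters)
  ultimately obtain x where x: "x \<in> S" "\<forall>y\<in>S. cmod x \<le> cmod y"
    using continuous_attains_inf[OF _ _ continuous_on_norm_id] by blast
  then obtain f where f: "x \<in> cball 0 1" "f \<in> V" "f0 = Pop x f"
    by (auto simp: S_def)
  have "x \<noteq> 0"
  proof
    assume "x = 0"
    then show False
      using Pop_0[OF subsetD[OF V f(2)]] f(3) f0(2) by simp
  qed
  have "cmod y = 1" if h: "h \<in> V" "y \<in> cball 0 1" "f = Pop y h" for h y
  proof (rule ccontr)
    assume "cmod y \<noteq> 1"
    have "f0 = Pop (x * y) h"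
      using f h Pop_Pop by simp
    moreover have "cmod (x * y) \<le> 1"
      using f h by (simp add: norm_mult mult_le_one)
    ultimately have "x * y \<in> S"
      using h(1) by (auto simp: S_def)
    then have "cmod x \<le> cmod x * cmod y"
      using x(2) norm_mult by metis
    then show False
      using \<open>x \<noteq> 0\<close> \<open>cmod y \<noteq> 1\<close> h(2) by (simp add: mult_le_cancel_left1)
  qed
  then show ?thesis
    using that f by blast
qed

lemma bor_subset: "bor V \<subseteq> V"
  by (auto simp: bor_def)

lemma mem_bor_iff:
  "V \<noteq> {eA} \<Longrightarrow> f \<in> bor V \<longleftrightarrow> f \<in> V \<and> (\<forall>g\<in>V. \<forall>x\<in>cball 0 1. f = Pop x g \<longrightarrow> cmod x = 1)"
  by (simp add: bor_def)

lemma exists_bor_Pop: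
  assumes V: "V \<subseteq> anA0" and cpt: "lu_compact V" and f0: "f0 \<in> V"
  shows "\<exists>f\<in>bor V. \<exists>x\<in>cball 0 1. f0 = Pop x f"
proof (cases "V = {eA}")
  case True
  have "Pop 1 eA = eA"
    using V f0 True Pop_1 by (auto simp: anA0_def)
  then show ?thesis
    using True f0 by (auto simp: bor_def intro!: bexI[of _ 1])
next
  case nonsingleton: False
  have border: "f \<in> bor V" if "f \<in> V" "\<forall>h\<in>V. \<forall>y\<in>cball 0 1. f = Pop y h \<longrightarrow> cmod y = 1" for f
    unfolding mem_bor_iff[OF nonsingleton] using that by (rule conjI)
  show ?thesis
  proof (cases "f0 = eA")
    case True
    obtain f1 where f1: "f1 \<in> V" "f1 \<noteq> eA"
      using nonsingleton f0 by blast
    obtain x1 f where f: "x1 \<in> cball 0 1" "f \<in> V" "f1 = Pop x1 f"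
      "\<forall>h\<in>V. \<forall>y\<in>cball 0 1. f = Pop y h \<longrightarrow> cmod y = 1"
      by (rule Pop_border_exists[OF V cpt f1])
    have "f0 = Pop 0 f"
      using True Pop_0[OF subsetD[OF V f(2)]] by simp
    then show ?thesis
      by (intro bexI[OF _ border[OF f(2,4)]] bexI[of _ 0]) auto
  next
    case False
    obtain x f where f: "x \<in> cball 0 1" "f \<in> V" "f0 = Pop x f"
      "\<forall>h\<in>V. \<forall>y\<in>cball 0 1. f = Pop y h \<longrightarrow> cmod y = 1"
      by (rule Pop_border_exists[OF V cpt f0 False])
    then show ?thesis
      by (intro bexI[OF _ border[OF f(2,4)]] bexI[OF _ f(1)] f(3))
  qed
qed

lemma frontier_mem_image_sphere:
  fixes F :: "complex \<Rightarrow> complex"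
  assumes r: "0 < r" and F: "continuous_on (cball a r) F" "F holomorphic_on ball a r"
    and L: "F ` ball a r \<subseteq> L" and w: "w \<in> frontier L" "w \<in> F ` cball a r"
  shows "w \<in> F ` sphere a r"
proof -
  obtain x where x: "x \<in> cball a r" "w = F x"
    using w(2) by blast
  show ?thesis
  proof (cases "x \<in> sphere a r")
    case True
    then show ?thesis using x by blast
  next
    case False
    then have "x \<in> ball a r"
      using x(1) by auto
    show ?thesis
    proof (cases "F constant_on ball a r")
      case True
      then obtain c where c: "\<And>y. y \<in> ball a r \<Longrightarrow> F y = c"
        by (auto simp: constant_on_def)
      have sphere: "a + of_real r \<in> sphere a r"
        using r by (simp add: dist_norm)
      have closure: "closure (ball a r) = cball a r"
        using r by (rule closure_ball)
      have "F (a + of_real r) = c"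
      proof (rule continuous_constant_on_closure[where S = "ball a r" and f = F and a = c])
        show "continuous_on (closure (ball a r)) F"
          using F(1) closure by simp
        show "a + of_real r \<in> closure (ball a r)"
          using sphere closure by auto
      qed (rule c)
      then show ?thesis
        using sphere c \<open>x \<in> ball a r\<close> x(2) by blast
    next
      case False
      then have "open (F ` ball a r)"
        using open_mapping_thm[OF F(2)] by blast
      then have "w \<in> interior L"
        using L \<open>x \<in> ball a r\<close> x(2) interior_maximal by blast
      then show ?thesis
        using w(1) by (simp add: frontier_def)
    qed
  qed
qed

lemma hadamard_image_eq_bor:
  assumes V: "V \<subseteq> anA0" and cpt: "lu_compact V" and comp: "complete_Ac (dualT V)"
    and g: "g \<in> anAc"
  shows "(\<lambda>f. hadamard f g 1) ` V = (\<Union>f\<in>bor V. hadamard f g ` cball 0 1)"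
proof
  show "(\<lambda>f. hadamard f g 1) ` V \<subseteq> (\<Union>f\<in>bor V. hadamard f g ` cball 0 1)"
  proof
    fix w
    assume "w \<in> (\<lambda>f. hadamard f g 1) ` V"
    then obtain f0 where "f0 \<in> V" "w = hadamard f0 g 1"
      by blast
    moreover obtain f x where f: "f \<in> bor V" "x \<in> cball 0 1" "f0 = Pop x f"
      using exists_bor_Pop[OF V cpt \<open>f0 \<in> V\<close>] by blast
    moreover have "f holomorphic_on ball 0 1"
      using f(1) bor_subset V anA0_holomorphic by blast
    ultimately have "w = hadamard f g x"
      using hadamard_Pop by simp
    then show "w \<in> (\<Union>f\<in>bor V. hadamard f g ` cball 0 1)"
      using f(1,2) by blast
  qed
  show "(\<Union>f\<in>bor V. hadamard f g ` cball 0 1) \<subseteq> (\<lambda>f. hadamard f g 1) ` V"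
    using hadamard_image_subset[OF V cpt comp g] bor_subset by (intro UN_least) blast
qed

lemma frontier_hadamard_image_subset:
  assumes V: "V \<subseteq> anA0" and cpt: "lu_compact V" and comp: "complete_Ac (dualT V)"
    and g: "g \<in> anAc"
  shows "frontier ((\<lambda>f. hadamard f g 1) ` V) \<subseteq> (\<Union>f\<in>bor V. hadamard f g ` sphere 0 1)"
proof
  fix w
  assume w: "w \<in> frontier ((\<lambda>f. hadamard f g 1) ` V)"
  have "closed ((\<lambda>f. hadamard f g 1) ` V)"
    using compact_hadamard_image[OF V cpt g] by (rule compact_imp_closed)
  then have "w \<in> (\<lambda>f. hadamard f g 1) ` V"
    using w by (rule subsetD[OF frontier_subset_closed])
  then have "w \<in> (\<Union>f\<in>bor V. hadamard f g ` cball 0 1)"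
    unfolding hadamard_image_eq_bor[OF V cpt comp g] .
  then obtain f where f: "f \<in> bor V" "w \<in> hadamard f g ` cball 0 1"
    by blast
  then have "f \<in> V"
    using bor_subset by blast
  then have holo: "f holomorphic_on ball 0 1"
    using V anA0_holomorphic by blast
  have "hadamard f g ` ball 0 1 \<subseteq> (\<lambda>f. hadamard f g 1) ` V"
    using hadamard_image_subset[OF V cpt comp g \<open>f \<in> V\<close>] by auto
  then have "w \<in> hadamard f g ` sphere 0 1"
    using frontier_mem_image_sphere[OF zero_less_one hadamard_continuous_on_cball[OF holo g]
        hadamard_holomorphic_on_ball[OF holo g] _ w f(2)] by blast
  then show "w \<in> (\<Union>f\<in>bor V. hadamard f g ` sphere 0 1)"
    using f(1) by blast
qed

theorem theorem5:
  fixes V :: "(complex \<Rightarrow> complex) set" and g :: "complex \<Rightarrow> complex"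
  assumes "V \<subseteq> anA0" and "lu_compact V" and "complete_Ac (dualT V)"
    and "g \<in> anAc"
  shows "(\<lambda>f. hadamard f g 1) ` V = (\<Union>f\<in>bor V. hadamard f g ` cball 0 1)
    \<and> frontier ((\<lambda>f. hadamard f g 1) ` V) \<subseteq> (\<Union>f\<in>bor V. hadamard f g ` sphere 0 1)"
  using hadamard_image_eq_bor[OF assms] frontier_hadamard_image_subset[OF assms] by (rule conjI)

end
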